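(* Let $\Omega\subset\mathbb H^n$ be an open, horizontally bounded and $H$-convex set. If $u:\overline\Omega\to\mathbb R$ is an $H$-convex function with $u=0$ on $\partial\Omega$, then $u\le0$. Moreover, if $\Omega$ is (Euclidean) convex, then either $u\equiv0$ on $\overline\Omega$, or $u<0$ in $\Omega$.
   Context: $\mathbb H^n=\mathbb C^n\times\mathbb R\cong\mathbb R^{2n+1}$ with real coordinates $(x,y,t)$, $z=x+iy$, group law $(z,t)\circ(z',t')=(z+z',t+t'+2\,\mathrm{Im}\langle z,z'\rangle)$, $\langle z,z'\rangle=\sum_j z_j\overline{z'_j}$. Dilations $\delta_\lambda(z,t)=(\lambda z,\lambda^2t)$. Horizontal plane at $\xi_0=(x_0,y_0,t_0)$: $H_{\xi_0}=\{(x,y,t):t=t_0+2(x\cdot y_0-x_0\cdot y)\}$. Gauge $N(z,t)=(|z|^4+t^2)^{1/4}$, $d_H(\xi,\zeta)=N(\zeta^{-1}\circ\xi)$, $\mathrm{diam}_H$ the $d_H$-diameter. A set $\tilde\Omega$ is $H$-convex if for all $\xi_1,\xi_2\in\tilde\Omega$ with $\xi_1\in H_{\xi_2}$ and $\lambda\in[0,1]$, $\xi_1\circ\delta_\lambda(\xi_1^{-1}\circ\xi_2)\in\tilde\Omega$; a function $u$ on $\tilde\Omega$ is $H$-convex if $u(\xi_1\circ\delta_\lambda(\xi_1^{-1}\circ\xi_2))\le(1-\lambda)u(\xi_1)+\lambda u(\xi_2)$ for all such $\xi_1,\xi_2,\lambda$. $\Omega$ is horizontally bounded if $\sup\{\mathrm{diam}_H(\Omega\cap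 H_\xi):\xi\in\Omega\}<\infty$. *)

theory Defs
  imports "HOL-Analysis.Analysis"
begin

text \<open>Points of the Heisenberg group H^n = C^n x R, in real coordinates (x, y, t),
  z = x + i y, with x, y in R^n (index type 'n) and t in R.\<close>

type_synonym 'n heis = "(real^'n) \<times> (real^'n) \<times> real"

text \<open>Group law: Im <z,z'> = y . x' - x . y'.\<close>
definition hmult :: "'n::finite heis \<Rightarrow> 'n heis \<Rightarrow> 'n heis" where
  "hmult p q = (case p of (x, y, t) \<Rightarrow> case q of (x', y', t') \<Rightarrow>
      (x + x', y + y', t + t' + 2 * (y \<bullet> x' - x \<bullet> y')))"

definition hinv :: "'n::finite heis \<Rightarrow> 'n heis" where
  "hinv p = (case p of (x, y, t) \<Rightarrow> (- x, - y, - t))"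

definition hdil :: "real \<Rightarrow> 'n::finite heis \<Rightarrow> 'n heis" where
  "hdil l p = (case p of (x, y, t) \<Rightarrow> (l *\<^sub>R x, l *\<^sub>R y, l\<^sup>2 * t))"

definition hplane :: "'n::finite heis \<Rightarrow> 'n heis set" where
  "hplane p0 = (case p0 of (x0, y0, t0) \<Rightarrow>
      {(x, y, t). t = t0 + 2 * (x \<bullet> y0 - x0 \<bullet> y)})"

definition gauge :: "'n::finite heis \<Rightarrow> real" where
  "gauge p = (case p of (x, y, t) \<Rightarrow> root 4 ((norm x ^ 2 + norm y ^ 2) ^ 2 + t\<^sup>2))"

definition dH :: "'n::finite heis \<Rightarrow> 'n heis \<Rightarrow> real" where
  "dH p q = gauge (hmult (hinv q) p)"

definition H_convex_set :: "'n::finite heis set \<Rightarrow> bool" where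
  "H_convex_set S \<longleftrightarrow> (\<forall>p1\<in>S. \<forall>p2\<in>S. p1 \<in> hplane p2 \<longrightarrow>
      (\<forall>l\<in>{0..1}. hmult p1 (hdil l (hmult (hinv p1) p2)) \<in> S))"

definition H_convex_fun :: "'n::finite heis set \<Rightarrow> ('n heis \<Rightarrow> real) \<Rightarrow> bool" where
  "H_convex_fun S u \<longleftrightarrow> (\<forall>p1\<in>S. \<forall>p2\<in>S. p1 \<in> hplane p2 \<longrightarrow>
      (\<forall>l\<in>{0..1}. hmult p1 (hdil l (hmult (hinv p1) p2)) \<in> S \<longrightarrow>
         u (hmult p1 (hdil l (hmult (hinv p1) p2))) \<le> (1 - l) * u p1 + l * u p2))"

definition horiz_bounded :: "'n::finite heis set \<Rightarrow> bool" where
  "horiz_bounded S \<longleftrightarrow> (\<exists>C. \<forall>p\<in>S. \<forall>a\<in>S \<inter> hplane p. \<forall>b\<in>S \<inter> hplane p. dH a b \<le> C)"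

end

theory Submission
  imports Defs
begin

text \<open>Through every point p of \<Omega> runs a horizontal line, which by horizontal boundedness
  must leave \<Omega> in both directions; so p lies on an H-segment between two boundary points
  and H-convexity gives u p \<le> 0. The same argument with one end on the boundary and the other
  at a point r of the horizontal plane of p shows that u p = 0 forces u r = 0. Every point
  near q is reached from q in five horizontal steps (a horizontal commutator square adjusts the
  vertical coordinate), so both the zero set of u and its complement are open in \<Omega>; for
  connected \<Omega> one of them is empty.\<close>

definition hline :: "'n::finite heis \<Rightarrow> real^'n \<Rightarrow> real^'n \<Rightarrow> real \<Rightarrow> 'n heis" where
  "hline p a b s = hmult p (s *\<^sub>R a, s *\<^sub>R b, 0)"

lemma hline_eq:
  "hline (x, y, t) a b s = (x + s *\<^sub>R a, y + s *\<^sub>R b, t + 2 * s * (y \<bullet> a - x \<bullet> b))"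
  by (simp add: hline_def hmult_def algebra_simps)

lemma hline_0 [simp]: "hline p a b 0 = p"
  by (cases p) (simp add: hline_eq)

lemma hline_uminus: "hline p (- a) (- b) s = hline p a b (- s)"
  by (cases p) (simp add: hline_eq algebra_simps)

lemma hplane_commute: "r \<in> hplane p \<Longrightarrow> p \<in> hplane r"
  by (cases p; cases r) (auto simp: hplane_def inner_commute)

lemma hline_in_hplane: "hline p a b s \<in> hplane (hline p a b s')"
  by (cases p) (simp add: hline_eq hplane_def inner_add_left inner_add_right algebra_simps inner_commute)

lemma hplane_eq_hline:
  assumes "r \<in> hplane p"
  shows "r = hline p (fst r - fst p) (fst (snd r) - fst (snd p)) 1"
  using assms
  by (cases p; cases r) (simp add: hline_eq hplane_def inner_diff_left inner_diff_right algebra_simps inner_commute)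

lemma H_segment_hline:
  "hmult (hline p a b s1) (hdil l (hmult (hinv (hline p a b s1)) (hline p a b s2)))
     = hline p a b (s1 + l * (s2 - s1))"
  by (cases p) (simp add: hline_eq hmult_def hinv_def hdil_def inner_add_left inner_add_right
      algebra_simps inner_commute power2_eq_square)

lemma hline_components:
  "hline p a b s = (fst p + s *\<^sub>R a, fst (snd p) + s *\<^sub>R b,
     snd (snd p) + 2 * s * (fst (snd p) \<bullet> a - fst p \<bullet> b))"
  by (cases p) (simp add: hline_eq)

lemma continuous_on_hline [continuous_intros]:
  "continuous_on S f \<Longrightarrow> continuous_on S g \<Longrightarrow> continuous_on S h \<Longrightarrow> continuous_on S k \<Longrightarrow>
    continuous_on S (\<lambda>x. hline (f x) (g x) (h x) (k x))"
  unfolding hline_components by (intro continuous_intros)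

lemma gauge_horizontal: "gauge (x, y, 0) = norm (x, y)"
  by (simp add: gauge_def norm_Pair real_root_mult_exp[of 2 2, simplified] sqrt_def[symmetric])

lemma dH_hline: "dH (hline p a b s) p = \<bar>s\<bar> * norm (a, b)"
proof -
  have "hmult (hinv p) (hline p a b s) = (s *\<^sub>R a, s *\<^sub>R b, 0)"
    by (cases p) (simp add: hline_eq hmult_def hinv_def inner_add_left inner_add_right
        algebra_simps inner_commute)
  then show ?thesis
    by (simp add: dH_def gauge_horizontal flip: scaleR_Pair)
qed

lemma hline_meets_frontier:
  fixes \<Omega> :: "'n::finite heis set"
  assumes "open \<Omega>" "horiz_bounded \<Omega>" "p \<in> \<Omega>" "(a, b) \<noteq> 0"
  shows "\<exists>s>0. hline p a b s \<in> frontier \<Omega>"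
proof -
  obtain C where C: "\<And>q x y. q \<in> \<Omega> \<Longrightarrow> x \<in> \<Omega> \<inter> hplane q \<Longrightarrow> y \<in> \<Omega> \<inter> hplane q \<Longrightarrow> dH x y \<le> C"
    using assms(2) unfolding horiz_bounded_def by blast
  define s0 where "s0 = (\<bar>C\<bar> + 1) / norm (a, b)"
  have "s0 > 0"
    using assms(4) by (simp add: s0_def add_pos_nonneg)
  have far: "dH (hline p a b s0) p > C"
    using assms(4) \<open>s0 > 0\<close> by (simp add: dH_hline s0_def)
  have "hline p a b s0 \<notin> \<Omega>"
  proof
    assume "hline p a b s0 \<in> \<Omega>"
    moreover have "hline p a b s0 \<in> hplane p" "p \<in> hplane p"
      using hline_in_hplane[of p a b s0 0] hline_in_hplane[of p a b 0 0] by simp_all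
    ultimately show False
      using C[of p "hline p a b s0" p] assms(3) far by simp
  qed
  moreover have "p \<in> hline p a b ` {0..s0}" "hline p a b s0 \<in> hline p a b ` {0..s0}"
    using \<open>s0 > 0\<close> hline_0 by (force, force)
  moreover have "connected (hline p a b ` {0..s0})"
    by (intro connected_continuous_image continuous_intros) auto
  ultimately obtain s where s: "s \<in> {0..s0}" "hline p a b s \<in> frontier \<Omega>"
    using connected_Int_frontier[of "hline p a b ` {0..s0}" \<Omega>] assms(3) by blast
  moreover have "s \<noteq> 0"
    using s assms(1,3) by (auto simp: frontier_def interior_open)
  ultimately show ?thesis
    by (intro exI[of _ s]) auto
qed

lemma H_convex_fun_hline:
  assumes "H_convex_fun S u" "hline p a b s1 \<in> S" "hline p a b s2 \<in> S" "l \<in> {0..1}"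
    "hline p a b (s1 + l * (s2 - s1)) \<in> S"
  shows "u (hline p a b (s1 + l * (s2 - s1))) \<le> (1 - l) * u (hline p a b s1) + l * u (hline p a b s2)"
  using assms hline_in_hplane[of p a b s1 s2] H_segment_hline[of p a b s1 l s2]
  unfolding H_convex_fun_def by metis

text \<open>The H-segment from the boundary point beyond p through p to r: u vanishes at its start.\<close>
lemma H_convex_fun_le_multiple:
  fixes \<Omega> :: "'n::finite heis set"
  assumes "open \<Omega>" "horiz_bounded \<Omega>" "H_convex_fun (closure \<Omega>) u"
    "\<forall>q\<in>frontier \<Omega>. u q = 0" "p \<in> \<Omega>" "r \<in> closure \<Omega>" "r \<in> hplane p"
  shows "\<exists>l>0. u p \<le> l * u r"
proof -
  define a where "a = fst r - fst p"
  define b where "b = fst (snd r) - fst (snd p)"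
  have r: "r = hline p a b 1"
    unfolding a_def b_def by (rule hplane_eq_hline[OF assms(7)])
  show ?thesis
  proof (cases "(a, b) = 0")
    case True
    then have "r = p"
      using r by (cases p) (simp add: hline_eq zero_prod_def)
    then show ?thesis
      by (intro exI[of _ 1]) simp
  next
    case False
    then have "(- a, - b) \<noteq> 0"
      by (simp add: zero_prod_def)
    then obtain s where "s > 0" "hline p (- a) (- b) s \<in> frontier \<Omega>"
      using hline_meets_frontier[OF assms(1,2,5)] by blast
    then have s: "s > 0" "hline p a b (- s) \<in> frontier \<Omega>"
      by (simp_all add: hline_uminus)
    define l where "l = s / (1 + s)"
    have l: "l \<in> {0..1}" "l > 0"
      using s by (auto simp: l_def)
    have at_p: "- s + l * (1 - - s) = 0"
      using s by (simp add: l_def field_simps)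
    have "u (hline p a b (- s + l * (1 - - s))) \<le>
        (1 - l) * u (hline p a b (- s)) + l * u (hline p a b 1)"
      by (rule H_convex_fun_hline[OF assms(3)])
        (use s l at_p assms(5,6) r closure_Un_frontier closure_subset in auto)
    then show ?thesis
      using at_p s assms(4) r l by auto
  qed
qed

lemma H_convex_fun_nonpos:
  fixes \<Omega> :: "'n::finite heis set"
  assumes "open \<Omega>" "horiz_bounded \<Omega>" "H_convex_fun (closure \<Omega>) u"
    "\<forall>q\<in>frontier \<Omega>. u q = 0" "p \<in> closure \<Omega>"
  shows "u p \<le> 0"
proof (cases "p \<in> \<Omega>")
  case True
  define e :: "real^'n" where "e = axis undefined 1"
  have "(e, 0) \<noteq> 0"
    by (simp add: e_def axis_eq_0_iff zero_prod_def)
  then obtain s where "hline p e 0 s \<in> frontier \<Omega>"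
    using hline_meets_frontier[OF assms(1,2) True] by blast
  moreover have "hline p e 0 s \<in> hplane p"
    using hline_in_hplane[of p e 0 s 0] by simp
  ultimately obtain l where "l > 0" "u p \<le> l * u (hline p e 0 s)"
    using H_convex_fun_le_multiple[OF assms(1-4) True] closure_Un_frontier by blast
  then show ?thesis
    using assms(4) \<open>hline p e 0 s \<in> frontier \<Omega>\<close> by simp
next
  case False
  then show ?thesis
    using assms(4,5) closure_Un_frontier[of \<Omega>] by auto
qed

lemma H_convex_fun_zero_iff_hplane:
  fixes \<Omega> :: "'n::finite heis set"
  assumes "open \<Omega>" "horiz_bounded \<Omega>" "H_convex_fun (closure \<Omega>) u"
    "\<forall>q\<in>frontier \<Omega>. u q = 0" "p \<in> \<Omega>" "r \<in> \<Omega>" "r \<in> hplane p"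
  shows "u p = 0 \<longleftrightarrow> u r = 0"
proof -
  have "u q = 0" if zero: "u p' = 0" and in_\<Omega>: "p' \<in> \<Omega>" "q \<in> \<Omega>" and "q \<in> hplane p'" for p' q
  proof -
    obtain l where "l > 0" "u p' \<le> l * u q"
      using H_convex_fun_le_multiple[OF assms(1-4) in_\<Omega>(1) _ \<open>q \<in> hplane p'\<close>] in_\<Omega>(2) closure_subset by blast
    moreover have "u q \<le> 0"
      using H_convex_fun_nonpos[OF assms(1-4)] in_\<Omega>(2) closure_subset by blast
    ultimately show ?thesis
      using zero by (simp add: zero_le_mult_iff)
  qed
  then show ?thesis
    using assms(5-7) hplane_commute by metis
qed

lemma hline_commutator:
  "hline (hline (hline (hline (x, y, t) a 0 \<alpha>) 0 b \<beta>) (- a) 0 \<alpha>) 0 (- b) \<beta>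
     = (x, y, t - 4 * \<alpha> * \<beta> * (a \<bullet> b))"
  by (simp add: hline_eq inner_add_left inner_add_right algebra_simps inner_commute)

definition hstep :: "'n::finite heis set \<Rightarrow> 'n heis \<Rightarrow> 'n heis \<Rightarrow> bool" where
  "hstep S p r \<longleftrightarrow> p \<in> S \<and> r \<in> S \<and> r \<in> hplane p"

lemma hstep_hline: "p \<in> S \<Longrightarrow> hline p a b s \<in> S \<Longrightarrow> hstep S p (hline p a b s)"
  using hline_in_hplane[of p a b s 0] by (simp add: hstep_def)

lemma sqrt_abs_mult_sqrt: "sqrt \<bar>d\<bar> * sqrt d = d"
  by (cases "d \<ge> 0") (simp_all add: real_sqrt_minus flip: real_sqrt_mult)

text \<open>The first step lifts q' to the horizontal plane of q; the remaining four run around a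
  horizontal commutator square, whose vertical displacement -4 \<alpha> \<beta> is chosen to be the
  missing height \<delta>.\<close>
lemma eventually_hstep_reachable:
  fixes \<Omega> :: "'n::finite heis set"
  assumes "open \<Omega>" "q \<in> \<Omega>"
  shows "eventually (\<lambda>q'. (hstep \<Omega>)\<^sup>*\<^sup>* q q') (nhds q)"
proof -
  define e :: "real^'n" where "e = axis undefined 1"
  define c0 where "c0 = (\<lambda>q' :: 'n heis. hline q (fst q' - fst q) (fst (snd q') - fst (snd q)) 1)"
  define \<delta> where "\<delta> = (\<lambda>q'. snd (snd q') - snd (snd (c0 q')))"
  define \<alpha> where "\<alpha> = (\<lambda>q'. sqrt \<bar>\<delta> q'\<bar> / 2)"
  define \<beta> where "\<beta> = (\<lambda>q'. - sqrt (\<delta> q') / 2)"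
  define c1 where "c1 = (\<lambda>q'. hline (c0 q') e 0 (\<alpha> q'))"
  define c2 where "c2 = (\<lambda>q'. hline (c1 q') 0 e (\<beta> q'))"
  define c3 where "c3 = (\<lambda>q'. hline (c2 q') (- e) 0 (\<alpha> q'))"
  have closes: "hline (c3 q') 0 (- e) (\<beta> q') = q'" for q'
  proof -
    obtain x y t where q': "q' = (x, y, t)"
      by (cases q')
    have "c0 q' = (x, y, t - \<delta> q')"
      by (simp add: c0_def \<delta>_def hline_components q')
    then have "hline (c3 q') 0 (- e) (\<beta> q') = (x, y, t - \<delta> q' - 4 * \<alpha> q' * \<beta> q' * (e \<bullet> e))"
      unfolding c3_def c2_def c1_def by (simp only: hline_commutator)
    also have "4 * \<alpha> q' * \<beta> q' = - \<delta> q'"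
      using sqrt_abs_mult_sqrt[of "\<delta> q'"] by (simp add: \<alpha>_def \<beta>_def)
    finally show ?thesis
      by (simp add: e_def inner_axis_axis q')
  qed
  have "c0 q = q"
    by (simp add: c0_def hline_components)
  then have fixes_q: "c0 q = q" "c1 q = q" "c2 q = q" "c3 q = q"
    by (simp_all add: c3_def c2_def c1_def \<alpha>_def \<beta>_def \<delta>_def)
  have cont: "continuous_on UNIV c0" "continuous_on UNIV c1" "continuous_on UNIV c2" "continuous_on UNIV c3"
    unfolding c3_def c2_def c1_def \<alpha>_def \<beta>_def \<delta>_def c0_def by (auto intro!: continuous_intros)
  have stays: "eventually (\<lambda>q'. c q' \<in> \<Omega>) (nhds q)" if "continuous_on UNIV c" "c q = q" for c
    using that assms eventually_nhds_in_open[of "c -` \<Omega>" q] continuous_on_open_vimage[of UNIV c]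
    by auto
  have "eventually (\<lambda>q'. q' \<in> \<Omega>) (nhds q)"
    using assms by (rule eventually_nhds_in_open)
  with stays[OF cont(1) fixes_q(1)] stays[OF cont(2) fixes_q(2)]
    stays[OF cont(3) fixes_q(3)] stays[OF cont(4) fixes_q(4)]
  show ?thesis
  proof eventually_elim
    case (elim q')
    have "hstep \<Omega> q (c0 q')" "hstep \<Omega> (c0 q') (c1 q')" "hstep \<Omega> (c1 q') (c2 q')"
      "hstep \<Omega> (c2 q') (c3 q')"
      using hstep_hline[of q \<Omega>] hstep_hline[of "c0 q'" \<Omega>] hstep_hline[of "c1 q'" \<Omega>]
        hstep_hline[of "c2 q'" \<Omega>] elim assms(2)
      by (simp_all only: c0_def c1_def c2_def c3_def)
    moreover have "hstep \<Omega> (c3 q') q'"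
      using hstep_hline[of "c3 q'" \<Omega> 0 "- e" "\<beta> q'"] elim by (simp only: closes)
    ultimately show ?case
      by (meson r_into_rtranclp rtranclp.rtrancl_into_rtrancl)
  qed
qed

lemma rtranclp_hstep_invariant:
  assumes "\<And>p r. hstep S p r \<Longrightarrow> P p = P r" "(hstep S)\<^sup>*\<^sup>* p q"
  shows "P p = P q"
  using assms(2) by (induction rule: rtranclp_induct) (auto dest: assms(1))

lemma open_hstep_invariant:
  fixes \<Omega> :: "'n::finite heis set" and P :: "'n heis \<Rightarrow> bool"
  assumes "open \<Omega>" "\<And>p r. hstep \<Omega> p r \<Longrightarrow> P p = P r"
  shows "open {q \<in> \<Omega>. P q}"
  unfolding open_subopen[of "{q \<in> \<Omega>. P q}"]
proof
  fix q assume q: "q \<in> {q \<in> \<Omega>. P q}"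
  have in_\<Omega>: "hstep \<Omega> p r \<Longrightarrow> p \<in> \<Omega> \<longleftrightarrow> r \<in> \<Omega>" for p r
    by (simp add: hstep_def)
  have "eventually ((hstep \<Omega>)\<^sup>*\<^sup>* q) (nhds q)"
    using eventually_hstep_reachable[OF assms(1)] q by simp
  then have "eventually (\<lambda>q'. q' \<in> {q \<in> \<Omega>. P q}) (nhds q)"
  proof (rule eventually_mono)
    fix q' assume "(hstep \<Omega>)\<^sup>*\<^sup>* q q'"
    then show "q' \<in> {q \<in> \<Omega>. P q}"
      using q rtranclp_hstep_invariant[of \<Omega> P, OF assms(2)]
        rtranclp_hstep_invariant[of \<Omega> "\<lambda>p. p \<in> \<Omega>", OF in_\<Omega>] by auto
  qed
  then show "\<exists>T. open T \<and> q \<in> T \<and> T \<subseteq> {q \<in> \<Omega>. P q}"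
    by (auto simp: eventually_nhds)
qed

lemma connected_hstep_invariant:
  fixes \<Omega> :: "'n::finite heis set" and P :: "'n heis \<Rightarrow> bool"
  assumes "open \<Omega>" "connected \<Omega>" "\<And>p r. hstep \<Omega> p r \<Longrightarrow> P p = P r" "p \<in> \<Omega>" "q \<in> \<Omega>"
  shows "P p = P q"
proof -
  have "open {q \<in> \<Omega>. P q}" "open {q \<in> \<Omega>. \<not> P q}"
    using open_hstep_invariant[OF assms(1), of P] open_hstep_invariant[OF assms(1), of "\<lambda>q. \<not> P q"]
      assms(3) by blast+
  then have "{q \<in> \<Omega>. P q} \<inter> \<Omega> = {} \<or> {q \<in> \<Omega>. \<not> P q} \<inter> \<Omega> = {}"
    by (rule connectedD[OF assms(2)]) auto
  then show ?thesis
    using assms(4,5) by blast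
qed

lemma H_convex_fun_zero_or_neg:
  fixes \<Omega> :: "'n::finite heis set"
  assumes "open \<Omega>" "connected \<Omega>" "horiz_bounded \<Omega>" "H_convex_fun (closure \<Omega>) u"
    "\<forall>q\<in>frontier \<Omega>. u q = 0"
  shows "(\<forall>p\<in>closure \<Omega>. u p = 0) \<or> (\<forall>p\<in>\<Omega>. u p < 0)"
proof (cases "\<exists>p\<in>\<Omega>. u p = 0")
  case True
  then obtain p where p: "p \<in> \<Omega>" "u p = 0"
    by blast
  have zero_inv: "hstep \<Omega> q r \<Longrightarrow> (u q = 0) = (u r = 0)" for q r
    using H_convex_fun_zero_iff_hplane[OF assms(1,3,4,5)] by (simp add: hstep_def)
  have "u q = 0" if "q \<in> \<Omega>" for q
    using connected_hstep_invariant[of \<Omega> "\<lambda>q. u q = 0", OF assms(1,2) zero_inv p(1) that] p(2) by simp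
  then show ?thesis
    using assms(5) closure_Un_frontier[of \<Omega>] by auto
next
  case False
  have "u p < 0" if "p \<in> \<Omega>" for p
    using H_convex_fun_nonpos[OF assms(1,3,4,5)] closure_subset that False
    by (metis less_eq_real_def subsetD)
  then show ?thesis
    by blast
qed

theorem proposition2p4:
  fixes \<Omega> :: "'n::finite heis set" and u :: "'n heis \<Rightarrow> real"
  assumes "open \<Omega>" and "horiz_bounded \<Omega>" and "H_convex_set \<Omega>"
    and "H_convex_fun (closure \<Omega>) u"
    and "\<forall>p\<in>frontier \<Omega>. u p = 0"
  shows "(\<forall>p\<in>closure \<Omega>. u p \<le> 0) \<and>
         (convex \<Omega> \<longrightarrow> (\<forall>p\<in>closure \<Omega>. u p = 0) \<or> (\<forall>p\<in>\<Omega>. u p < 0))"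
  using H_convex_fun_nonpos[OF assms(1,2,4,5)]
    H_convex_fun_zero_or_neg[OF assms(1) convex_connected assms(2,4,5)] by blast

end
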